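(* Let $\mathbb{C}$ be a locally small category and $\mathbb{C}_{\mathit{fin}}$ a full subcategory satisfying (C1)–(C5) below. Let $U:\mathbb{C}^*\to\mathbb{C}$ be a reasonable expansion with unique restrictions, let $F$ be a homogeneous locally finite object of $\mathbb{C}$ and let $G=\mathrm{Aut}(F)$. Then for all $\mathcal{F},\mathcal{F}'\in U^{-1}(F)$ we have $\mathcal{F}'\in\overline{\mathcal{F}^G}$ (closure in the topology $\sigma_F$) if and only if $\mathrm{Age}(\mathcal{F}')\subseteq\mathrm{Age}(\mathcal{F})$.
   Context: Write $A\to B$ if $\hom(A,B)\ne\varnothing$. Conditions: (C1) all morphisms of $\mathbb{C}$ are monomorphisms; (C2) $\mathrm{Ob}(\mathbb{C}_{\mathit{fin}})$ is a set; (C3) $\hom(A,B)$ is finite for $A,B\in\mathrm{Ob}(\mathbb{C}_{\mathit{fin}})$; (C4) for every $F\in\mathrm{Ob}(\mathbb{C})$ there is $A\in\mathrm{Ob}(\mathbb{C}_{\mathit{fin}})$ with $A\to F$; (C5) for every $B\in\mathrm{Ob}(\mathbb{C}_{\mathit{fin}})$ the set $\{A\in\mathrm{Ob}(\mathbb{C}_{\mathit{fin}}):A\to B\}$ is finite. $F$ is homogeneous if for all $A\in\mathrm{Ob}(\mathbb{C}_{\mathit{fin}})$ and $e_1,e_2\in\hom(A,F)$ there is $g\in\mathrm{Aut}(F)$ with $g\cdot e_1=e_2$. $F$ is locally finite if for all $A,B\in\mathrm{Ob}(\mathbb{C}_{\mathit{fin}})$, $e\in\hom(A,F)$, $f\in\hom(B,F)$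 there exist $D\in\mathrm{Ob}(\mathbb{C}_{\mathit{fin}})$, $r\in\hom(D,F)$, $p\in\hom(A,D)$, $q\in\hom(B,D)$ with $r\cdot p=e$, $r\cdot q=f$, such that for every $H\in\mathrm{Ob}(\mathbb{C})$, $r'\in\hom(H,F)$, $p'\in\hom(A,H)$, $q'\in\hom(B,H)$ with $r'\cdot p'=e$, $r'\cdot q'=f$ there is $s\in\hom(D,H)$ with $r'\cdot s=r$, $s\cdot p=p'$, $s\cdot q=q'$. An expansion of $\mathbb{C}$ is a locally small category $\mathbb{C}^*$ with a functor $U:\mathbb{C}^*\to\mathbb{C}$ surjective on objects and injective on hom-sets; we regard $\hom_{\mathbb{C}^*}(\mathcal{A},\mathcal{B})\subseteq\hom_{\mathbb{C}}(U\mathcal{A},U\mathcal{B})$, and $U^{-1}(A)=\{\mathcal{A}:U(\mathcal{A})=A\}$. $U$ is reasonable if for every $e\in\hom(A,B)$ and $\mathcal{A}\in U^{-1}(A)$ there is $\mathcal{B}\in U^{-1}(B)$ with $e\in\hom(\mathcal{A},\mathcal{B})$; it has unique restrictions if for every $\mathcal{B}$ and $e\in\hom(A,U(\mathcal{B}))$ there is exactly one $\mathcal{A}\in U^{-1}(A)$ with $e\in\hom(\mathcal{A},\mathcal{B})$. $\mathbb{C}^*_{\mathit{fin}}$ is the full subcategory of $\mathbb{C}^*$ on $\bigcup\{U^{-1}(A):A\in\mathrm{Ob}(\mathbb{C}_{\mathit{fin}})\}$, and for $\mathcal{F}\in\mathrm{Ob}(\mathbb{C}^* )$, $\mathrm{Age}(\mathcal{F})=\{\mathcal{A}\in\mathrm{Ob}(\mathbb{C}^*_{\mathit{fin}}):\mathcal{A}\to\mathcal{F}\}$.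 For $g\in G$ and $\mathcal{F}\in U^{-1}(F)$, $\mathcal{F}^g$ is the unique $\mathcal{F}'\in U^{-1}(F)$ with $g^{-1}\in\hom(\mathcal{F},\mathcal{F}')$, and $\mathcal{F}^G=\{\mathcal{F}^g:g\in G\}$. $\sigma_F$ is the topology on $U^{-1}(F)$ generated by the sets $N(e,\mathcal{A})=\{\mathcal{F}\in U^{-1}(F):e\in\hom(\mathcal{A},\mathcal{F})\}$ for $\mathcal{A}\in\mathrm{Ob}(\mathbb{C}^*_{\mathit{fin}})$ and $e\in\hom(U(\mathcal{A}),F)$. *)

theory Defs
  imports "HOL-Analysis.Analysis"
begin

text \<open>A (locally small) category presented by its object set, hom-sets,
  composition (comp g f = g after f) and identities.\<close>

record ('o, 'm) cat =
  Ob   :: "'o set"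
  hom  :: "'o \<Rightarrow> 'o \<Rightarrow> 'm set"
  comp :: "'m \<Rightarrow> 'm \<Rightarrow> 'm"
  ide  :: "'o \<Rightarrow> 'm"

definition category :: "('o, 'm) cat \<Rightarrow> bool" where
  "category C \<longleftrightarrow>
     (\<forall>A B. hom C A B \<noteq> {} \<longrightarrow> A \<in> Ob C \<and> B \<in> Ob C) \<and>
     (\<forall>A\<in>Ob C. ide C A \<in> hom C A A) \<and>
     (\<forall>A\<in>Ob C. \<forall>B\<in>Ob C. \<forall>D\<in>Ob C. \<forall>f\<in>hom C A B. \<forall>g\<in>hom C B D.
        comp C g f \<in> hom C A D) \<and>
     (\<forall>A\<in>Ob C. \<forall>B\<in>Ob C. \<forall>D\<in>Ob C. \<forall>E\<in>Ob C.
        \<forall>f\<in>hom C A B. \<forall>g\<in>hom C B D. \<forall>h\<in>hom C D E.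
          comp C h (comp C g f) = comp C (comp C h g) f) \<and>
     (\<forall>A\<in>Ob C. \<forall>B\<in>Ob C. \<forall>f\<in>hom C A B.
          comp C (ide C B) f = f \<and> comp C f (ide C A) = f)"

definition disjoint_homs :: "('o, 'm) cat \<Rightarrow> bool" where
  "disjoint_homs C \<longleftrightarrow>
     (\<forall>A B A' B' f. f \<in> hom C A B \<and> f \<in> hom C A' B' \<longrightarrow> A = A' \<and> B = B')"

definition arrow :: "('o, 'm) cat \<Rightarrow> 'o \<Rightarrow> 'o \<Rightarrow> bool" where
  "arrow C A B \<longleftrightarrow> hom C A B \<noteq> {}"

text \<open>Conditions (C1)-(C5); Obfin is the object set of the full subcategory C_fin.\<close>

definition all_mono :: "('o, 'm) cat \<Rightarrow> bool" where
  "all_mono C \<longleftrightarrow>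
     (\<forall>X\<in>Ob C. \<forall>A\<in>Ob C. \<forall>B\<in>Ob C. \<forall>f\<in>hom C A B. \<forall>g\<in>hom C X A. \<forall>h\<in>hom C X A.
        comp C f g = comp C f h \<longrightarrow> g = h)"

definition fin_homs :: "('o, 'm) cat \<Rightarrow> 'o set \<Rightarrow> bool" where
  "fin_homs C Obfin \<longleftrightarrow> (\<forall>A\<in>Obfin. \<forall>B\<in>Obfin. finite (hom C A B))"

definition fin_below_every :: "('o, 'm) cat \<Rightarrow> 'o set \<Rightarrow> bool" where
  "fin_below_every C Obfin \<longleftrightarrow> (\<forall>F\<in>Ob C. \<exists>A\<in>Obfin. arrow C A F)"

definition fin_many_below :: "('o, 'm) cat \<Rightarrow> 'o set \<Rightarrow> bool" where
  "fin_many_below C Obfin \<longleftrightarrow> (\<forall>B\<in>Obfin. finite {A\<in>Obfin. arrow C A B})"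

definition isos_aut :: "('o, 'm) cat \<Rightarrow> 'o \<Rightarrow> 'm set" (\<open>Aut\<close>) where
  "Aut C F = {g \<in> hom C F F. \<exists>h\<in>hom C F F. comp C g h = ide C F \<and> comp C h g = ide C F}"

definition aut_inv :: "('o, 'm) cat \<Rightarrow> 'o \<Rightarrow> 'm \<Rightarrow> 'm" where
  "aut_inv C F g = (THE h. h \<in> hom C F F \<and> comp C g h = ide C F \<and> comp C h g = ide C F)"

definition homogeneous :: "('o, 'm) cat \<Rightarrow> 'o set \<Rightarrow> 'o \<Rightarrow> bool" where
  "homogeneous C Obfin F \<longleftrightarrow>
     (\<forall>A\<in>Obfin. \<forall>e1\<in>hom C A F. \<forall>e2\<in>hom C A F. \<exists>g\<in>Aut C F. comp C g e1 = e2)"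

definition locally_finite :: "('o, 'm) cat \<Rightarrow> 'o set \<Rightarrow> 'o \<Rightarrow> bool" where
  "locally_finite C Obfin F \<longleftrightarrow>
     (\<forall>A\<in>Obfin. \<forall>B\<in>Obfin. \<forall>e\<in>hom C A F. \<forall>f\<in>hom C B F.
        (\<exists>D\<in>Obfin. \<exists>r\<in>hom C D F. \<exists>p\<in>hom C A D. \<exists>q\<in>hom C B D.
           comp C r p = e \<and> comp C r q = f \<and>
           (\<forall>H\<in>Ob C. \<forall>r'\<in>hom C H F. \<forall>p'\<in>hom C A H. \<forall>q'\<in>hom C B H.
              comp C r' p' = e \<and> comp C r' q' = f \<longrightarrow>
              (\<exists>s\<in>hom C D H. comp C r' s = r \<and> comp C s p = p' \<and> comp C s q = q'))))"

text \<open>An expansion: a category D whose morphisms are morphisms of C, with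
  hom_D(a,b) \<subseteq> hom_C(U a, U b); the functor U acts on objects by U and as the
  identity (inclusion) on morphisms, hence is injective on hom-sets.\<close>

definition expansion :: "('o, 'm) cat \<Rightarrow> ('p, 'm) cat \<Rightarrow> ('p \<Rightarrow> 'o) \<Rightarrow> bool" where
  "expansion C D U \<longleftrightarrow>
     category D \<and>
     U ` Ob D = Ob C \<and>
     (\<forall>a\<in>Ob D. \<forall>b\<in>Ob D. hom D a b \<subseteq> hom C (U a) (U b)) \<and>
     (\<forall>a\<in>Ob D. ide D a = ide C (U a)) \<and>
     (\<forall>a\<in>Ob D. \<forall>b\<in>Ob D. \<forall>c\<in>Ob D. \<forall>f\<in>hom D a b. \<forall>g\<in>hom D b c.
        comp D g f = comp C g f)"

definition fiber :: "('p, 'm) cat \<Rightarrow> ('p \<Rightarrow> 'o) \<Rightarrow> 'o \<Rightarrow> 'p set" where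
  "fiber D U A = {a \<in> Ob D. U a = A}"

definition reasonable :: "('o, 'm) cat \<Rightarrow> ('p, 'm) cat \<Rightarrow> ('p \<Rightarrow> 'o) \<Rightarrow> bool" where
  "reasonable C D U \<longleftrightarrow>
     (\<forall>A\<in>Ob C. \<forall>B\<in>Ob C. \<forall>e\<in>hom C A B. \<forall>a\<in>fiber D U A.
        \<exists>b\<in>fiber D U B. e \<in> hom D a b)"

definition unique_restrictions :: "('o, 'm) cat \<Rightarrow> ('p, 'm) cat \<Rightarrow> ('p \<Rightarrow> 'o) \<Rightarrow> bool" where
  "unique_restrictions C D U \<longleftrightarrow>
     (\<forall>b\<in>Ob D. \<forall>A\<in>Ob C. \<forall>e\<in>hom C A (U b). \<exists>!a. a \<in> fiber D U A \<and> e \<in> hom D a b)"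

definition Age :: "('p, 'm) cat \<Rightarrow> ('p \<Rightarrow> 'o) \<Rightarrow> 'o set \<Rightarrow> 'p \<Rightarrow> 'p set" where
  "Age D U Obfin \<F> = {a \<in> Ob D. U a \<in> Obfin \<and> arrow D a \<F>}"

text \<open>The orbit F^G = { F^g : g \<in> Aut(F) }, where F^g is the (unique) F' in U^{-1}(F)
  with g^{-1} \<in> hom(F, F').\<close>
definition orbit :: "('o, 'm) cat \<Rightarrow> ('p, 'm) cat \<Rightarrow> ('p \<Rightarrow> 'o) \<Rightarrow> 'o \<Rightarrow> 'p \<Rightarrow> 'p set" where
  "orbit C D U F \<F> =
     {\<F>' \<in> fiber D U F. \<exists>g\<in>Aut C F. aut_inv C F g \<in> hom D \<F> \<F>'}"

definition Nset :: "('p, 'm) cat \<Rightarrow> ('p \<Rightarrow> 'o) \<Rightarrow> 'o \<Rightarrow> 'm \<Rightarrow> 'p \<Rightarrow> 'p set" where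
  "Nset D U F e a = {\<F> \<in> fiber D U F. e \<in> hom D a \<F>}"

definition sigma_top :: "('o, 'm) cat \<Rightarrow> ('p, 'm) cat \<Rightarrow> ('p \<Rightarrow> 'o) \<Rightarrow> 'o set \<Rightarrow> 'o \<Rightarrow> 'p topology" where
  "sigma_top C D U Obfin F =
     subtopology
       (topology_generated_by
          {Nset D U F e a | e a. a \<in> Ob D \<and> U a \<in> Obfin \<and> e \<in> hom C (U a) F})
       (fiber D U F)"

end

theory Submission
  imports Defs
begin

text \<open>If \<open>\<F>'\<close> lies in the closure of the orbit, the open set \<open>N(e, \<A>)\<close> given by any
  \<open>e : \<A> \<rightarrow> \<F>'\<close> contains some \<open>\<F>\<^sup>g\<close>, and composing with \<open>g : \<F>\<^sup>g \<rightarrow> \<F>\<close> gives \<open>\<A> \<rightarrow> \<F>\<close>.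
  Conversely, amalgamating two finite substructures inside F (local finiteness) and
  restricting uniquely shows that the sets \<open>N(e, \<A>)\<close> containing \<open>\<F>'\<close> form a neighbourhood
  base at \<open>\<F>'\<close>. Given such a set, \<open>\<A> \<in> Age(\<F>') \<subseteq> Age(\<F>)\<close> via some f; homogeneity gives
  \<open>g \<in> Aut(F)\<close> with \<open>g f = e\<close>, and reasonableness transports \<open>\<F>\<close> along g to a member of
  the orbit lying in \<open>N(e, \<A>)\<close>.\<close>

lemma category_hom_Ob: "category C \<Longrightarrow> f \<in> hom C A B \<Longrightarrow> A \<in> Ob C \<and> B \<in> Ob C"
  unfolding category_def by blast

lemma category_ide_hom: "category C \<Longrightarrow> A \<in> Ob C \<Longrightarrow> ide C A \<in> hom C A A"
  unfolding category_def by blast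

lemma category_comp_hom:
  "category C \<Longrightarrow> f \<in> hom C A B \<Longrightarrow> g \<in> hom C B E \<Longrightarrow> comp C g f \<in> hom C A E"
  unfolding category_def by blast

lemma category_comp_assoc:
  "category C \<Longrightarrow> f \<in> hom C A B \<Longrightarrow> g \<in> hom C B E \<Longrightarrow> h \<in> hom C E K
   \<Longrightarrow> comp C h (comp C g f) = comp C (comp C h g) f"
  unfolding category_def by blast

lemma category_comp_ide_left: "category C \<Longrightarrow> f \<in> hom C A B \<Longrightarrow> comp C (ide C B) f = f"
  unfolding category_def by blast

lemma category_comp_ide_right: "category C \<Longrightarrow> f \<in> hom C A B \<Longrightarrow> comp C f (ide C A) = f"
  unfolding category_def by blast

lemma aut_inv_inverse:
  assumes cat: "category C" and g: "g \<in> Aut C F"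
  shows "aut_inv C F g \<in> hom C F F \<and> comp C g (aut_inv C F g) = ide C F
         \<and> comp C (aut_inv C F g) g = ide C F"
proof -
  obtain h where h: "h \<in> hom C F F" "comp C g h = ide C F" "comp C h g = ide C F"
    using g unfolding isos_aut_def by blast
  have g_hom: "g \<in> hom C F F"
    using g unfolding isos_aut_def by blast
  have "h' = h" if h': "h' \<in> hom C F F" "comp C h' g = ide C F" for h'
  proof -
    have "h' = comp C h' (comp C g h)"
      using h(2) category_comp_ide_right[OF cat h'(1)] by simp
    also have "\<dots> = comp C (ide C F) h"
      using category_comp_assoc[OF cat h(1) g_hom h'(1)] h'(2) by simp
    also have "\<dots> = h"
      using category_comp_ide_left[OF cat h(1)] .
    finally show ?thesis .
  qed
  then have "aut_inv C F g = h"
    unfolding aut_inv_def using h by blast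
  with h show ?thesis by simp
qed

lemma aut_inv_Aut:
  assumes "category C" and "g \<in> Aut C F"
  shows "aut_inv C F g \<in> Aut C F"
  using aut_inv_inverse[OF assms] assms(2) unfolding isos_aut_def by blast

lemma aut_inv_aut_inv:
  assumes cat: "category C" and g: "g \<in> Aut C F"
  shows "aut_inv C F (aut_inv C F g) = g"
proof -
  let ?h = "aut_inv C F g" and ?k = "aut_inv C F (aut_inv C F g)"
  have h: "?h \<in> hom C F F" "comp C g ?h = ide C F"
    using aut_inv_inverse[OF cat g] by auto
  have k: "?k \<in> hom C F F" "comp C ?h ?k = ide C F"
    using aut_inv_inverse[OF cat aut_inv_Aut[OF cat g]] by auto
  have g_hom: "g \<in> hom C F F"
    using g unfolding isos_aut_def by blast
  have "?k = comp C (comp C g ?h) ?k"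
    using h(2) category_comp_ide_left[OF cat k(1)] by simp
  also have "\<dots> = comp C g (ide C F)"
    using category_comp_assoc[OF cat k(1) h(1) g_hom] k(2) by simp
  also have "\<dots> = g"
    using category_comp_ide_right[OF cat g_hom] .
  finally show ?thesis .
qed

definition sigma_basis :: "('o, 'm) cat \<Rightarrow> ('p, 'm) cat \<Rightarrow> ('p \<Rightarrow> 'o) \<Rightarrow> 'o set \<Rightarrow> 'o \<Rightarrow> 'p set set"
  where "sigma_basis C D U Obfin F =
    {Nset D U F e a | e a. a \<in> Ob D \<and> U a \<in> Obfin \<and> e \<in> hom C (U a) F}"

lemma sigma_top_eq:
  "sigma_top C D U Obfin F =
     subtopology (topology_generated_by (sigma_basis C D U Obfin F)) (fiber D U F)"
  unfolding sigma_top_def sigma_basis_def ..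

lemma openin_sigma_top_Nset:
  assumes "a \<in> Ob D" and "U a \<in> Obfin" and "e \<in> hom C (U a) F"
  shows "openin (sigma_top C D U Obfin F) (Nset D U F e a)"
proof -
  have "openin (topology_generated_by (sigma_basis C D U Obfin F)) (Nset D U F e a)"
    using assms unfolding sigma_basis_def by (blast intro: topology_generated_by_Basis)
  moreover have "Nset D U F e a \<subseteq> fiber D U F"
    unfolding Nset_def by blast
  ultimately show ?thesis
    unfolding sigma_top_eq openin_subtopology by blast
qed

locale unique_restriction_expansion =
  fixes C :: "('o, 'm) cat" and D :: "('p, 'm) cat" and U :: "'p \<Rightarrow> 'o"
  assumes category_C: "category C"
    and expansion: "expansion C D U"
    and unique_restrictions: "unique_restrictions C D U"
begin

lemma category_D: "category D"
  using expansion unfolding expansion_def by blast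

lemma hom_D_Ob: "f \<in> hom D a b \<Longrightarrow> a \<in> Ob D \<and> b \<in> Ob D"
  using category_hom_Ob[OF category_D] .

lemma hom_D_hom_C: "f \<in> hom D a b \<Longrightarrow> f \<in> hom C (U a) (U b)"
  using expansion hom_D_Ob unfolding expansion_def by blast

lemma comp_hom_D:
  assumes f: "f \<in> hom D a b" and g: "g \<in> hom D b c"
  shows "comp C g f \<in> hom D a c"
proof -
  have "comp D g f = comp C g f"
    using expansion hom_D_Ob[OF f] hom_D_Ob[OF g] f g unfolding expansion_def by blast
  then show ?thesis
    using category_comp_hom[OF category_D f g] by simp
qed

lemma ide_hom_D:
  assumes "a \<in> Ob D"
  shows "ide C (U a) \<in> hom D a a"
proof -
  have "ide D a = ide C (U a)"
    using expansion assms unfolding expansion_def by blast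
  then show ?thesis
    using category_ide_hom[OF category_D assms] by simp
qed

lemma restriction_exists:
  assumes "b \<in> Ob D" and "e \<in> hom C A (U b)"
  obtains a where "a \<in> fiber D U A" and "e \<in> hom D a b"
  using unique_restrictions assms category_hom_Ob[OF category_C assms(2)]
  unfolding unique_restrictions_def by blast

lemma restriction_unique:
  assumes "e \<in> hom D a b" and "e \<in> hom D a' b" and "U a = U a'"
  shows "a = a'"
proof -
  have e: "e \<in> hom C (U a) (U b)" and b: "b \<in> Ob D"
    using hom_D_hom_C[OF assms(1)] hom_D_Ob[OF assms(1)] by auto
  then have "\<exists>!x. x \<in> fiber D U (U a) \<and> e \<in> hom D x b"
    using unique_restrictions category_hom_Ob[OF category_C e]
    unfolding unique_restrictions_def by blast
  then show ?thesis
    using assms hom_D_Ob unfolding fiber_def by auto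
qed

lemma hom_D_of_comp:
  assumes r: "r \<in> hom D d X" and p: "p \<in> hom C (U a) (U d)" and rp: "comp C r p \<in> hom D a X"
  shows "p \<in> hom D a d"
proof -
  obtain a' where a': "a' \<in> fiber D U (U a)" "p \<in> hom D a' d"
    using restriction_exists[OF conjunct1[OF hom_D_Ob[OF r]] p] .
  have "a' = a"
    using restriction_unique[OF comp_hom_D[OF a'(2) r] rp] a'(1) unfolding fiber_def by simp
  with a' show ?thesis by simp
qed

lemma Age_mono: "f \<in> hom D \<A> \<B> \<Longrightarrow> Age D U Obfin \<A> \<subseteq> Age D U Obfin \<B>"
  unfolding Age_def arrow_def using comp_hom_D by blast

lemma orbit_member_hom:
  assumes y: "y \<in> orbit C D U F \<F>" and \<F>: "\<F> \<in> fiber D U F"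
  obtains g where "g \<in> Aut C F" and "g \<in> hom D y \<F>"
proof -
  obtain g where g: "g \<in> Aut C F" and inv: "aut_inv C F g \<in> hom D \<F> y" and yF: "y \<in> fiber D U F"
    using y unfolding orbit_def by blast
  have "comp C (aut_inv C F g) g = ide C (U y)" and g_hom: "g \<in> hom C (U y) (U \<F>)"
    using aut_inv_inverse[OF category_C g] g yF \<F>
    unfolding fiber_def isos_aut_def by auto
  moreover have "ide C (U y) \<in> hom D y y"
    using ide_hom_D yF unfolding fiber_def by blast
  ultimately have "g \<in> hom D y \<F>"
    using hom_D_of_comp[OF inv g_hom] by simp
  with g that show ?thesis by blast
qed

lemma orbit_memberI:
  assumes "g \<in> Aut C F" and "g \<in> hom D \<F> \<G>" and "\<G> \<in> fiber D U F"
  shows "\<G> \<in> orbit C D U F \<F>"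
  unfolding orbit_def
proof (intro CollectI conjI bexI)
  show "aut_inv C F (aut_inv C F g) \<in> hom D \<F> \<G>"
    using assms(2) aut_inv_aut_inv[OF category_C assms(1)] by simp
qed (use assms(3) aut_inv_Aut[OF category_C assms(1)] in simp_all)

lemma Nset_Int_refine:
  assumes lf: "locally_finite C Obfin F" and \<F>': "\<F>' \<in> fiber D U F"
    and a1: "U a1 \<in> Obfin" "e1 \<in> hom D a1 \<F>'"
    and a2: "U a2 \<in> Obfin" "e2 \<in> hom D a2 \<F>'"
  obtains d r where "U d \<in> Obfin" and "r \<in> hom D d \<F>'"
    and "Nset D U F r d \<subseteq> Nset D U F e1 a1 \<inter> Nset D U F e2 a2"
proof -
  have \<F>'_Ob: "\<F>' \<in> Ob D" "U \<F>' = F"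
    using \<F>' unfolding fiber_def by auto
  obtain D0 r p q where D0: "D0 \<in> Obfin" "r \<in> hom C D0 F"
    and p: "p \<in> hom C (U a1) D0" "comp C r p = e1"
    and q: "q \<in> hom C (U a2) D0" "comp C r q = e2"
  proof -
    have "e1 \<in> hom C (U a1) F" "e2 \<in> hom C (U a2) F"
      using hom_D_hom_C[OF a1(2)] hom_D_hom_C[OF a2(2)] \<F>'_Ob(2) by auto
    then show thesis
      using lf[unfolded locally_finite_def, rule_format, OF a1(1) a2(1)] that by blast
  qed
  have "r \<in> hom C D0 (U \<F>')"
    using D0(2) \<F>'_Ob(2) by simp
  then obtain d where d: "d \<in> fiber D U D0" "r \<in> hom D d \<F>'"
    by (rule restriction_exists[OF \<F>'_Ob(1)])
  have "p \<in> hom D a1 d" "q \<in> hom D a2 d"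
    using hom_D_of_comp[OF d(2)] p q a1(2) a2(2) d(1) unfolding fiber_def by auto
  then have "Nset D U F r d \<subseteq> Nset D U F e1 a1 \<inter> Nset D U F e2 a2"
    unfolding Nset_def using comp_hom_D p(2) q(2) by blast
  moreover have "U d \<in> Obfin"
    using d(1) D0(1) unfolding fiber_def by simp
  ultimately show ?thesis
    using that d(2) by blast
qed

lemma sigma_top_nhds_base:
  assumes lf: "locally_finite C Obfin F" and \<F>': "\<F>' \<in> fiber D U F"
    and T: "openin (sigma_top C D U Obfin F) T" "\<F>' \<in> T"
  obtains a e where "U a \<in> Obfin" and "e \<in> hom D a \<F>'" and "Nset D U F e a \<subseteq> T"
proof -
  let ?S = "sigma_basis C D U Obfin F"
  let ?P = "\<lambda>W. \<exists>a e. U a \<in> Obfin \<and> e \<in> hom D a \<F>' \<and> Nset D U F e a \<subseteq> W"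
  obtain W where W: "generate_topology_on ?S W" "T = W \<inter> fiber D U F"
    using T(1) unfolding sigma_top_eq openin_subtopology openin_topology_generated_by_iff by blast
  have "\<F>' \<in> W \<Longrightarrow> ?P W"
    using W(1)
  proof (induction rule: generate_topology_on.induct)
    case Empty
    then show ?case by simp
  next
    case (Int W1 W2)
    then obtain a1 e1 a2 e2 where
      a1: "U a1 \<in> Obfin" "e1 \<in> hom D a1 \<F>'" "Nset D U F e1 a1 \<subseteq> W1" and
      a2: "U a2 \<in> Obfin" "e2 \<in> hom D a2 \<F>'" "Nset D U F e2 a2 \<subseteq> W2"
      by blast
    obtain d r where "U d \<in> Obfin" "r \<in> hom D d \<F>'"
      "Nset D U F r d \<subseteq> Nset D U F e1 a1 \<inter> Nset D U F e2 a2"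
      by (rule Nset_Int_refine[OF lf \<F>' a1(1,2) a2(1,2)])
    with a1(3) a2(3) show ?case
      by blast
  next
    case (UN K)
    then show ?case by blast
  next
    case (Basis s)
    then show ?case
      unfolding sigma_basis_def Nset_def by blast
  qed
  moreover have "Nset D U F e a \<subseteq> fiber D U F" for e a
    unfolding Nset_def by blast
  ultimately show ?thesis
    using that T(2) W(2) by blast
qed

lemma topspace_sigma_top:
  assumes C4: "fin_below_every C Obfin"
  shows "topspace (sigma_top C D U Obfin F) = fiber D U F"
proof
  show "fiber D U F \<subseteq> topspace (sigma_top C D U Obfin F)"
  proof
    fix \<F>' assume \<F>': "\<F>' \<in> fiber D U F"
    then have \<F>'_Ob: "\<F>' \<in> Ob D" "U \<F>' = F"
      unfolding fiber_def by auto
    then have "F \<in> Ob C"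
      using expansion unfolding expansion_def by blast
    then obtain A e where "A \<in> Obfin" "e \<in> hom C A (U \<F>')"
      using C4 \<F>'_Ob(2) unfolding fin_below_every_def arrow_def by blast
    then obtain a where "a \<in> Ob D" "U a \<in> Obfin" "e \<in> hom D a \<F>'"
      using restriction_exists[OF \<F>'_Ob(1)] unfolding fiber_def by blast
    moreover have "e \<in> hom C (U a) F"
      using hom_D_hom_C[OF \<open>e \<in> hom D a \<F>'\<close>] \<F>'_Ob(2) by simp
    ultimately have "openin (sigma_top C D U Obfin F) (Nset D U F e a)"
      by (rule_tac openin_sigma_top_Nset)
    moreover have "\<F>' \<in> Nset D U F e a"
      using \<F>' \<open>e \<in> hom D a \<F>'\<close> unfolding Nset_def by blast
    ultimately show "\<F>' \<in> topspace (sigma_top C D U Obfin F)"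
      using openin_subset by blast
  qed
qed (simp add: sigma_top_eq)

lemma Age_subset_if_in_closure_orbit:
  assumes \<F>: "\<F> \<in> fiber D U F" and \<F>': "\<F>' \<in> fiber D U F"
    and cl: "\<F>' \<in> sigma_top C D U Obfin F closure_of orbit C D U F \<F>"
  shows "Age D U Obfin \<F>' \<subseteq> Age D U Obfin \<F>"
proof
  fix a assume "a \<in> Age D U Obfin \<F>'"
  then obtain e where a: "a \<in> Ob D" "U a \<in> Obfin" and e: "e \<in> hom D a \<F>'"
    unfolding Age_def arrow_def by blast
  have "e \<in> hom C (U a) F"
    using hom_D_hom_C[OF e] \<F>' unfolding fiber_def by simp
  then have "openin (sigma_top C D U Obfin F) (Nset D U F e a)"
    using a by (rule_tac openin_sigma_top_Nset)
  moreover have "\<F>' \<in> Nset D U F e a"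
    using \<F>' e unfolding Nset_def by blast
  ultimately obtain y where y: "y \<in> orbit C D U F \<F>" "y \<in> Nset D U F e a"
    using cl unfolding in_closure_of by blast
  obtain g where "g \<in> hom D y \<F>"
    using orbit_member_hom[OF y(1) \<F>] .
  moreover have "a \<in> Age D U Obfin y"
    using a y(2) unfolding Age_def arrow_def Nset_def by blast
  ultimately show "a \<in> Age D U Obfin \<F>"
    using Age_mono by blast
qed

lemma in_closure_orbit_if_Age_subset:
  assumes homog: "homogeneous C Obfin F" and reas: "reasonable C D U"
    and lf: "locally_finite C Obfin F" and C4: "fin_below_every C Obfin"
    and \<F>: "\<F> \<in> fiber D U F" and \<F>': "\<F>' \<in> fiber D U F"
    and age: "Age D U Obfin \<F>' \<subseteq> Age D U Obfin \<F>"
  shows "\<F>' \<in> sigma_top C D U Obfin F closure_of orbit C D U F \<F>"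
  unfolding in_closure_of topspace_sigma_top[OF C4]
proof (intro conjI allI impI \<F>')
  fix T assume "\<F>' \<in> T \<and> openin (sigma_top C D U Obfin F) T"
  then obtain a e where a: "U a \<in> Obfin" and e: "e \<in> hom D a \<F>'" and N: "Nset D U F e a \<subseteq> T"
    using sigma_top_nhds_base[OF lf \<F>'] by blast
  then have "a \<in> Age D U Obfin \<F>"
    using age hom_D_Ob unfolding Age_def arrow_def by blast
  then obtain f where f: "f \<in> hom D a \<F>"
    unfolding Age_def arrow_def by blast
  have "f \<in> hom C (U a) F" "e \<in> hom C (U a) F"
    using hom_D_hom_C[OF f] hom_D_hom_C[OF e] \<F> \<F>' unfolding fiber_def by auto
  then obtain g where g: "g \<in> Aut C F" "comp C g f = e"
    using homog a unfolding homogeneous_def by blast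
  obtain \<G> where \<G>: "\<G> \<in> fiber D U F" "g \<in> hom D \<F> \<G>"
    using reas g(1) \<F> category_hom_Ob[OF category_C]
    unfolding reasonable_def isos_aut_def by blast
  have "\<G> \<in> orbit C D U F \<F>"
    using orbit_memberI[OF g(1) \<G>(2,1)] .
  moreover have "\<G> \<in> T"
    using comp_hom_D[OF f \<G>(2)] g(2) \<G>(1) N unfolding Nset_def by blast
  ultimately show "\<exists>y. y \<in> orbit C D U F \<F> \<and> y \<in> T"
    by blast
qed

end

theorem lemma5p11:
  fixes C :: "('o, 'm) cat" and Obfin :: "'o set"
    and D :: "('p, 'm) cat" and U :: "'p \<Rightarrow> 'o" and F :: 'o
  assumes cat: "category C" "disjoint_homs C"
    and fin_sub: "Obfin \<subseteq> Ob C"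
    and C1: "all_mono C"
    and C3: "fin_homs C Obfin"
    and C4: "fin_below_every C Obfin"
    and C5: "fin_many_below C Obfin"
    and exp: "expansion C D U"
    and reas: "reasonable C D U"
    and ur: "unique_restrictions C D U"
    and FOb: "F \<in> Ob C"
    and hom: "homogeneous C Obfin F"
    and lf: "locally_finite C Obfin F"
    and F1: "\<F> \<in> fiber D U F"
    and F2: "\<F>' \<in> fiber D U F"
  shows "\<F>' \<in> sigma_top C D U Obfin F closure_of orbit C D U F \<F>
         \<longleftrightarrow> Age D U Obfin \<F>' \<subseteq> Age D U Obfin \<F>"
proof -
  interpret unique_restriction_expansion C D U
    using cat(1) exp ur by unfold_locales
  show ?thesis
    using Age_subset_if_in_closure_orbit[OF F1 F2]
      in_closure_orbit_if_Age_subset[OF hom reas lf C4 F1 F2]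
    by blast
qed

end
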